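(* Let $S$ be a signal of a mixed signaling scheme such that the set $\{w_1(j): j\in S\}$ consists of a single bidder. Then $S$ is singleton-splittable, i.e. $\sum_{j\in S}\varphi_{j,S}\,\mathrm{rev}(j)\ge\mathrm{rev}(S)$.
   Context: Setting: $n\ge 2$ bidders, $m$ item types with probabilities $p_j$, nonnegative valuations $v_{i,j}$; $\psi_{i,j}=p_jv_{i,j}$. A mixed signaling scheme is a finite signal set $\mathcal{S}$ and $\varphi:[m]\times\mathcal{S}\to[0,1]$ with $\sum_S\varphi(j,S)=1$ for each $j$; $\varphi_{j,S}=\varphi(j,S)$; $j\in S$ means $\varphi_{j,S}>0$. Ties are broken by a fixed priority order on bidders. $w_1(S)$ is the bidder maximizing $\sum_j\psi_{i,j}\varphi_{j,S}$ and $w_2(S)$ the maximizer among $i\ne w_1(S)$; $\mathrm{rev}(S)=\sum_j\varphi_{j,S}\psi_{w_2(S),j}$. For a type $j$, $w_1(j)$ is the bidder maximizing $\psi_{i,j}$ and $\mathrm{rev}(j)=\mathrm{max2}_i\psi_{i,j}$ (second-largest entry with multiplicity). *)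

theory Defs
  imports Complex_Main "HOL-Library.Multiset"
begin

text \<open>Bidders are 0..<n, item types are 0..<m. Ties are broken by a fixed
priority order given by an injective rank function pr on bidders: a bidder
with smaller rank wins ties.\<close>

definition best :: "(nat \<Rightarrow> nat) \<Rightarrow> (nat \<Rightarrow> real) \<Rightarrow> nat set \<Rightarrow> nat" where
  "best pr f A = (THE i. i \<in> A \<and> (\<forall>k\<in>A. f k < f i \<or> (f k = f i \<and> pr i \<le> pr k)))"

definition psi :: "(nat \<Rightarrow> real) \<Rightarrow> (nat \<Rightarrow> nat \<Rightarrow> real) \<Rightarrow> nat \<Rightarrow> nat \<Rightarrow> real" where
  "psi p v i j = p j * v i j"

definition sigval :: "nat \<Rightarrow> (nat \<Rightarrow> real) \<Rightarrow> (nat \<Rightarrow> nat \<Rightarrow> real) \<Rightarrow> (nat \<Rightarrow> 's \<Rightarrow> real) \<Rightarrow> 's \<Rightarrow> nat \<Rightarrow> real" where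
  "sigval m p v \<phi> S i = (\<Sum>j<m. psi p v i j * \<phi> j S)"

definition w1_sig where
  "w1_sig n m pr p v \<phi> S = best pr (sigval m p v \<phi> S) {..<n}"

definition w2_sig where
  "w2_sig n m pr p v \<phi> S = best pr (sigval m p v \<phi> S) ({..<n} - {w1_sig n m pr p v \<phi> S})"

definition rev_sig where
  "rev_sig n m pr p v \<phi> S = (\<Sum>j<m. \<phi> j S * psi p v (w2_sig n m pr p v \<phi> S) j)"

definition w1_type where
  "w1_type n pr p v j = best pr (\<lambda>i. psi p v i j) {..<n}"

text \<open>Second-largest entry (with multiplicity) of the column (\<psi>_{i,j})_i.\<close>
definition rev_type :: "nat \<Rightarrow> (nat \<Rightarrow> real) \<Rightarrow> (nat \<Rightarrow> nat \<Rightarrow> real) \<Rightarrow> nat \<Rightarrow> real" where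
  "rev_type n p v j =
     (let xs = sorted_list_of_multiset (image_mset (\<lambda>i. psi p v i j) (mset_set {..<n}))
      in xs ! (n - 2))"

definition types_in where
  "types_in m \<phi> S = {j. j < m \<and> \<phi> j S > 0}"

end

theory Submission
  imports Defs
begin

text \<open>All types in S have the same highest bidder a. At most one of w1(S), w2(S) is a,
so some bidder b \<noteq> a among them satisfies rev(S) = val_{w2(S)}(S) \<le> val_b(S)
= \<Sum>_{j\<in>S} \<phi>_{j,S} \<psi>_{b,j}. For each j \<in> S the entries \<psi>_{a,j} \<ge> \<psi>_{b,j} are two
entries of column j that are at least \<psi>_{b,j}, hence \<psi>_{b,j} \<le> rev(j).\<close>

lemma best_mem_max:
  assumes "finite A" and "A \<noteq> {}" and "inj_on pr A"
  shows "best pr f A \<in> A" and "\<And>k. k \<in> A \<Longrightarrow> f k \<le> f (best pr f A)"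
proof -
  let ?P = "\<lambda>i. i \<in> A \<and> (\<forall>k\<in>A. f k < f i \<or> (f k = f i \<and> pr i \<le> pr k))"
  define B where "B = {i\<in>A. f i = Max (f ` A)}"
  have "Max (f ` A) \<in> f ` A" using assms(1,2) by simp
  then have "finite B" and "B \<noteq> {}" using assms(1) unfolding B_def by auto
  then have "Min (pr ` B) \<in> pr ` B" by simp
  then obtain i0 where "i0 \<in> B" and i0_min: "pr i0 = Min (pr ` B)" by auto
  have "?P i0"
  proof -
    have "\<forall>k\<in>A. f k \<le> f i0" using \<open>i0 \<in> B\<close> assms(1) unfolding B_def by auto
    moreover have "pr i0 \<le> pr k" if "k \<in> A" "f k = f i0" for k
      using that \<open>finite B\<close> \<open>i0 \<in> B\<close> i0_min unfolding B_def by auto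
    ultimately show ?thesis using \<open>i0 \<in> B\<close> unfolding B_def by force
  qed
  moreover have "i = i0" if "?P i" for i
  proof -
    from that \<open>?P i0\<close> have "pr i = pr i0" by force
    then show ?thesis using assms(3) that \<open>?P i0\<close> by (meson inj_onD)
  qed
  ultimately have "best pr f A = i0" unfolding best_def by (rule the_equality)
  with \<open>?P i0\<close> show "best pr f A \<in> A" and "\<And>k. k \<in> A \<Longrightarrow> f k \<le> f (best pr f A)"
    by force+
qed

lemma sorted_nth_second_largest_ge:
  fixes xs :: "'a::linorder list"
  assumes "sorted xs" and "2 \<le> length (filter (\<lambda>x. c \<le> x) xs)"
  shows "c \<le> xs ! (length xs - 2)"
proof (rule ccontr)
  let ?k = "length xs - 1"
  assume "\<not> c \<le> xs ! (length xs - 2)"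
  have "length xs \<ge> 2" using assms(2) by (metis le_trans length_filter_le)
  have "\<not> c \<le> x" if x: "x \<in> set (take ?k xs)" for x
  proof -
    obtain i where "i < ?k" and "x = xs ! i"
      using x \<open>length xs \<ge> 2\<close> by (auto simp: in_set_conv_nth)
    then have "x \<le> xs ! (length xs - 2)"
      using assms(1) by (auto intro: sorted_nth_mono)
    with \<open>\<not> c \<le> xs ! (length xs - 2)\<close> show ?thesis by auto
  qed
  then have "filter (\<lambda>x. c \<le> x) xs = filter (\<lambda>x. c \<le> x) (drop ?k xs)"
    by (metis append_take_drop_id filter_append filter_False self_append_conv2)
  then have "length (filter (\<lambda>x. c \<le> x) xs) \<le> 1"
    by (metis length_filter_le length_drop \<open>length xs \<ge> 2\<close> diff_diff_cancel
        le_trans one_le_numeral)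
  with assms(2) show False by simp
qed

lemma second_largest_image_ge:
  fixes f :: "'a \<Rightarrow> 'b::linorder"
  assumes "finite A" and "a \<in> A" and "b \<in> A" and "a \<noteq> b" and "f b \<le> f a"
  shows "f b \<le> sorted_list_of_multiset (image_mset f (mset_set A)) ! (card A - 2)"
proof -
  define xs where "xs = sorted_list_of_multiset (image_mset f (mset_set A))"
  have mset_xs: "mset xs = image_mset f (mset_set A)" unfolding xs_def by simp
  then have "length xs = card A" by (metis size_mset size_image_mset size_mset_set)
  have "length (filter (\<lambda>x. f b \<le> x) xs) = card {i\<in>A. f b \<le> f i}"
    by (metis mset_xs mset_filter size_mset filter_mset_image_mset filter_mset_mset_set
        \<open>finite A\<close> size_image_mset size_mset_set)
  also have "card {a, b} \<le> card {i\<in>A. f b \<le> f i}"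
    using assms by (intro card_mono) auto
  finally have "2 \<le> length (filter (\<lambda>x. f b \<le> x) xs)" using \<open>a \<noteq> b\<close> by simp
  then show ?thesis
    using sorted_nth_second_largest_ge[of xs] \<open>length xs = card A\<close> by (simp add: xs_def)
qed

lemma rev_type_ge:
  assumes "a < n" and "b < n" and "a \<noteq> b" and "psi p v b j \<le> psi p v a j"
  shows "psi p v b j \<le> rev_type n p v j"
  using second_largest_image_ge[of "{..<n}" a b "\<lambda>i. psi p v i j"] assms
  by (simp add: rev_type_def)

lemma w1_type_max:
  assumes "n \<ge> 1" and "inj_on pr {..<n}"
  shows "w1_type n pr p v j < n" and "\<And>i. i < n \<Longrightarrow> psi p v i j \<le> psi p v (w1_type n pr p v j) j"
  using best_mem_max[where A="{..<n}" and pr=pr and f="\<lambda>i. psi p v i j"] assms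
  by (auto simp: w1_type_def lessThan_empty_iff)

lemma rev_sig_eq_sigval_w2: "rev_sig n m pr p v \<phi> S = sigval m p v \<phi> S (w2_sig n m pr p v \<phi> S)"
  by (simp add: rev_sig_def sigval_def mult.commute)

text \<open>Whichever bidder a is excluded, the runner-up is dominated by w1(S) or is itself \<noteq> a.\<close>

lemma w2_sig_le_other_bidder:
  assumes "n \<ge> 2" and "inj_on pr {..<n}"
  obtains b where "b < n" and "b \<noteq> a"
    and "sigval m p v \<phi> S (w2_sig n m pr p v \<phi> S) \<le> sigval m p v \<phi> S b"
proof -
  let ?val = "sigval m p v \<phi> S"
  define w1 where "w1 = w1_sig n m pr p v \<phi> S"
  define w2 where "w2 = w2_sig n m pr p v \<phi> S"
  have "(0::nat) \<in> {..<n}" and "(if w1 = 0 then 1 else 0) \<in> {..<n} - {w1}"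
    using assms(1) by auto
  then have "{..<n} \<noteq> {}" and "{..<n} - {w1} \<noteq> {}" by blast+
  then have w1: "w1 < n" "\<And>k. k < n \<Longrightarrow> ?val k \<le> ?val w1"
    and w2: "w2 < n" "w2 \<noteq> w1"
    using best_mem_max[where A="{..<n}" and pr=pr and f="?val"]
      best_mem_max[where A="{..<n} - {w1}" and pr=pr and f="?val"]
      assms(2) inj_on_subset[OF assms(2), of "{..<n} - {w1}"]
    unfolding w1_def w2_def w1_sig_def w2_sig_def by auto
  show thesis
  proof (cases "w1 = a")
    case True
    with w2 show thesis by (intro that[of w2]) (auto simp: w2_def)
  next
    case False
    with w1 w2 show thesis by (intro that[of w1]) (auto simp: w2_def)
  qed
qed

lemma sigval_eq_sum_types_in:
  assumes "\<And>j. j < m \<Longrightarrow> 0 \<le> \<phi> j S"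
  shows "sigval m p v \<phi> S i = (\<Sum>j\<in>types_in m \<phi> S. psi p v i j * \<phi> j S)"
  unfolding sigval_def
proof (rule sum.mono_neutral_right)
  show "\<forall>j\<in>{..<m} - types_in m \<phi> S. psi p v i j * \<phi> j S = 0"
    using assms by (force simp: types_in_def)
qed (auto simp: types_in_def)

theorem corollary1:
  fixes n m :: nat and pr :: "nat \<Rightarrow> nat" and p :: "nat \<Rightarrow> real"
    and v :: "nat \<Rightarrow> nat \<Rightarrow> real" and Sig :: "'s set" and \<phi> :: "nat \<Rightarrow> 's \<Rightarrow> real"
    and S :: 's and a :: nat
  assumes "n \<ge> 2"
    and "inj_on pr {..<n}"
    and "\<forall>j<m. p j \<ge> 0" and "(\<Sum>j<m. p j) = 1"
    and "\<forall>i<n. \<forall>j<m. v i j \<ge> 0"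
    and "finite Sig"
    and "\<forall>j<m. \<forall>s\<in>Sig. 0 \<le> \<phi> j s \<and> \<phi> j s \<le> 1"
    and "\<forall>j<m. (\<Sum>s\<in>Sig. \<phi> j s) = 1"
    and "S \<in> Sig"
    and "w1_type n pr p v ` types_in m \<phi> S = {a}"
  shows "(\<Sum>j\<in>types_in m \<phi> S. \<phi> j S * rev_type n p v j) \<ge> rev_sig n m pr p v \<phi> S"
proof -
  let ?T = "types_in m \<phi> S"
  have n1: "n \<ge> 1" using assms(1) by simp
  have \<phi>_nonneg: "\<And>j. j < m \<Longrightarrow> 0 \<le> \<phi> j S" using assms(7,9) by auto
  have top: "\<And>j. j \<in> ?T \<Longrightarrow> w1_type n pr p v j = a" using assms(10) by auto
  obtain j0 where "j0 \<in> ?T" using assms(10) by auto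
  then have "a < n" using w1_type_max(1)[OF n1 assms(2)] top by metis
  obtain b where "b < n" "b \<noteq> a"
    and w2_le: "sigval m p v \<phi> S (w2_sig n m pr p v \<phi> S) \<le> sigval m p v \<phi> S b"
    using w2_sig_le_other_bidder[OF assms(1,2)] .
  have "psi p v b j \<le> rev_type n p v j" if "j \<in> ?T" for j
    using rev_type_ge[OF \<open>a < n\<close> \<open>b < n\<close>] \<open>b \<noteq> a\<close>
      w1_type_max(2)[OF n1 assms(2) \<open>b < n\<close>, of p v j] top[OF that] by auto
  moreover have "\<And>j. j \<in> ?T \<Longrightarrow> 0 \<le> \<phi> j S" by (simp add: types_in_def)
  ultimately have "(\<Sum>j\<in>?T. psi p v b j * \<phi> j S) \<le> (\<Sum>j\<in>?T. \<phi> j S * rev_type n p v j)"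
    by (intro sum_mono) (simp add: mult.commute mult_left_mono)
  with w2_le show ?thesis
    by (simp add: rev_sig_eq_sigval_w2 sigval_eq_sum_types_in[where \<phi>=\<phi> and S=S, OF \<phi>_nonneg])
qed

end
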